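(* Let $L, M\ge1$ be integers. Let $\sigma$ be $L$-periodic, $\theta$ an affine permutation of period $L$, $\sigma'$ be $ML$-periodic and $\theta'$ an affine permutation of period $ML$. Let $\mu,\mu'$ be Maya diagrams and $\nu=(\nu_+,\nu_-)$ a pair of Young diagrams, and suppose $$\sigma\circ\theta=\sigma'\circ\theta',\qquad \mu\circ\theta=\mu'\circ\theta'.$$ Then, as formal series, $$F^{(ML)}_{(\sigma',\theta';\mu',\nu)}(u'_0,\dots,u'_{ML-1})\Big|_{u'_{i+kL}=u_i\ (0\le i\le L-1,\ 0\le k\le M-1)}=F^{(L)}_{(\sigma,\theta;\mu,\nu)}(u_0,\dots,u_{L-1}).$$ Equivalently, the non-commutative topological vertex $\mathcal{C}_{(\sigma,\theta;\mu,\nu)}$ is obtained from $\mathcal{C}_{(\sigma',\theta';\mu',\nu)}$ by imposing $q^{\theta}_i=q'^{\theta'}_i=q'^{\theta'}_{i+L}=\cdots=q'^{\theta'}_{i+(M-1)L}$ for $i=0,\dots,L-1$.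
   Context: $\mathbb{Z}_h=\mathbb{Z}+\tfrac12$. For $K\ge1$, an affine permutation of period $K$ is a bijection $\theta:\mathbb{Z}_h\to\mathbb{Z}_h$ with $\theta(h+K)=\theta(h)+K$ and $\sum_{i=1}^K\theta(i-\frac12)=\sum_{i=1}^K(i-\frac12)$; a map $f:\mathbb{Z}_h\to\{\pm1\}$ is $K$-periodic if $f(h+K)=f(h)$. A Maya diagram is a map $\lambda:\mathbb{Z}_h\to\{\pm1\}$ equal to $-1$ for $h\ll0$ and $+1$ for $h\gg0$. A Young diagram $\lambda=(\lambda_1\ge\lambda_2\ge\cdots)$ is identified with its box set $\{(x,y)\in\mathbb{Z}_{\ge0}^2: x<\lambda_{y+1}\}$; $|\lambda|$ is its number of boxes. For Young diagrams write $\lambda\overset{+}{\succ}\lambda'$ if $\lambda_1\ge\lambda'_1\ge\lambda_2\ge\lambda'_2\ge\cdots$ and $\lambda\overset{-}{\succ}\lambda'$ if the same interlacing holds for the transposes (column lengths). Fix $K\ge1$, a $K$-periodic $\sigma$, an affine permutation $\theta$ of period $K$, a Maya diagram $\mu$ and Young diagrams $\nu=(\nu_+,\nu_-)$. A transition of type $(\sigma,\theta;\mu,\nu)$ is a map $\mathcal{V}$ from $\mathbb{Z}$ to Young diagrams such that $\mathcal{V}(n)=\nu_-$ for $n\ll0$, $\mathcal{V}(n)=\nu_+$ for $n\gg0$, and for every $h\in\mathbb{Z}_h$, writing $\epsilon=\mu(\theta(h))\in\{\pm1\}$ and $s=\sigma(\theta(h))$, one has $\mathcal{V}(h-\epsilon/2)\overset{s}{\succ}\mathcal{V}(h+\epsilon/2)$.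 (It is a known fact, assumed here, that when transitions exist there is a unique minimal transition $\mathcal{V}_{\min}$ with $\mathcal{V}_{\min}(n)\subseteq\mathcal{V}(n)$ for all $n$ and all transitions $\mathcal{V}$.) For a transition $\mathcal{V}$ and $0\le i\le K-1$ set $w_i(\mathcal{V})=\sum_{n\equiv i\ (\mathrm{mod}\ K)}\big(|\mathcal{V}(n)|-|\mathcal{V}_{\min}(n)|\big)$ (a finite sum), and define the formal series in variables $u_0,\dots,u_{K-1}$ $$F^{(K)}_{(\sigma,\theta;\mu,\nu)}(u_0,\dots,u_{K-1})=\sum_{\mathcal{V}}\prod_{i=0}^{K-1}u_i^{w_i(\mathcal{V})},$$ the sum over all transitions of type $(\sigma,\theta;\mu,\nu)$. (Geometrically this is the crystal-melting sum over finite subsets of the ground-state crystal $\{(n,x,y): (x,y)\notin\mathcal{V}_{\min}(n)\}$ obeying the melting rule, with atoms on slice $n$ colored $n \bmod K$.) The non-commutative topological vertex is $\mathcal{C}_{(\sigma,\theta;\mu,\nu)}(q_0,\dots,q_{K-1})=F^{(K)}_{(\sigma,\theta;\mu,\nu)}(q^\theta_0,\dots,q^\theta_{K-1})$, where, with $q_{j+K}=q_j$, $q^\theta_i=q_{a+1/2}q_{a+3/2}\cdots q_{b-1/2}$ if $a<b$ and $q^\theta_i=q_{a-1/2}^{-1}q_{a-3/2}^{-1}\cdots q_{b+1/2}^{-1}$ if $a>b$, for $a=\theta^{-1}(i-\frac12)$, $b=\theta^{-1}(i+\frac12)$. *)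

theory Defs
  imports Main "HOL-Library.Extended_Nat"
begin

text \<open>A half-integer h = m + 1/2 in Z_h is encoded by the integer m.
  A Young diagram is encoded by its (finite, down-closed) box set in nat x nat,
  box (x,y) meaning x < lambda_(y+1).\<close>

definition periodic :: "nat \<Rightarrow> (int \<Rightarrow> int) \<Rightarrow> bool" where
  "periodic K f \<longleftrightarrow> (\<forall>m. f (m + int K) = f m)"

definition pm_valued :: "(int \<Rightarrow> int) \<Rightarrow> bool" where
  "pm_valued f \<longleftrightarrow> (\<forall>m. f m = 1 \<or> f m = -1)"

text \<open>Affine permutation of period K (in the encoding h = m + 1/2: the condition
  sum_{i=1..K} theta(i-1/2) = sum_{i=1..K} (i-1/2) becomes
  sum_{m=0..K-1} theta m = sum_{m=0..K-1} m).\<close>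
definition affine_perm :: "nat \<Rightarrow> (int \<Rightarrow> int) \<Rightarrow> bool" where
  "affine_perm K \<theta> \<longleftrightarrow> bij \<theta> \<and> (\<forall>m. \<theta> (m + int K) = \<theta> m + int K)
     \<and> (\<Sum>m\<in>{0..<int K}. \<theta> m) = (\<Sum>m\<in>{0..<int K}. m)"

definition maya :: "(int \<Rightarrow> int) \<Rightarrow> bool" where
  "maya \<mu> \<longleftrightarrow> pm_valued \<mu> \<and> (\<exists>N. \<forall>m. m \<le> -N \<longrightarrow> \<mu> m = -1)
     \<and> (\<exists>N. \<forall>m. m \<ge> N \<longrightarrow> \<mu> m = 1)"

type_synonym young = "(nat \<times> nat) set"

definition young :: "young \<Rightarrow> bool" where
  "young Y \<longleftrightarrow> finite Y \<and>
     (\<forall>x y x' y'. (x, y) \<in> Y \<longrightarrow> x' \<le> x \<longrightarrow> y' \<le> y \<longrightarrow> (x', y') \<in> Y)"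

text \<open>row Y j = \<lambda>_(j+1) (length of the (j+1)-th row),
      col Y j = (j+1)-th column length (the transpose).\<close>
definition row :: "young \<Rightarrow> nat \<Rightarrow> nat" where
  "row Y j = card {x. (x, j) \<in> Y}"

definition col :: "young \<Rightarrow> nat \<Rightarrow> nat" where
  "col Y j = card {y. (j, y) \<in> Y}"

definition interl_plus :: "young \<Rightarrow> young \<Rightarrow> bool" where
  "interl_plus Y Y' \<longleftrightarrow> (\<forall>j. row Y j \<ge> row Y' j \<and> row Y' j \<ge> row Y (Suc j))"

definition interl_minus :: "young \<Rightarrow> young \<Rightarrow> bool" where
  "interl_minus Y Y' \<longleftrightarrow> (\<forall>j. col Y j \<ge> col Y' j \<and> col Y' j \<ge> col Y (Suc j))"

definition interl :: "int \<Rightarrow> young \<Rightarrow> young \<Rightarrow> bool" where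
  "interl s Y Y' \<longleftrightarrow> (if s = 1 then interl_plus Y Y' else interl_minus Y Y')"

text \<open>For h = m + 1/2 and
  \<epsilon> = \<mu>(\<theta> h): V(h - \<epsilon>/2) >^s V(h + \<epsilon>/2), i.e.
  \<epsilon> = 1: V m >^s V (m+1);  \<epsilon> = -1: V (m+1) >^s V m.\<close>
definition transition ::
  "(int \<Rightarrow> int) \<Rightarrow> (int \<Rightarrow> int) \<Rightarrow> (int \<Rightarrow> int) \<Rightarrow> young \<Rightarrow> young \<Rightarrow> (int \<Rightarrow> young) \<Rightarrow> bool" where
  "transition \<sigma> \<theta> \<mu> \<nu>p \<nu>m V \<longleftrightarrow>
     (\<forall>n. young (V n)) \<and>
     (\<exists>N. \<forall>n. n \<le> -N \<longrightarrow> V n = \<nu>m) \<and>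
     (\<exists>N. \<forall>n. n \<ge> N \<longrightarrow> V n = \<nu>p) \<and>
     (\<forall>m. if \<mu> (\<theta> m) = 1 then interl (\<sigma> (\<theta> m)) (V m) (V (m + 1))
          else interl (\<sigma> (\<theta> m)) (V (m + 1)) (V m))"

definition transitions ::
  "(int \<Rightarrow> int) \<Rightarrow> (int \<Rightarrow> int) \<Rightarrow> (int \<Rightarrow> int) \<Rightarrow> young \<Rightarrow> young \<Rightarrow> (int \<Rightarrow> young) set" where
  "transitions \<sigma> \<theta> \<mu> \<nu>p \<nu>m = {V. transition \<sigma> \<theta> \<mu> \<nu>p \<nu>m V}"

text \<open>The minimal transition (its existence and uniqueness when transitions exist
  is the assumed known fact).\<close>
definition Vmin ::
  "(int \<Rightarrow> int) \<Rightarrow> (int \<Rightarrow> int) \<Rightarrow> (int \<Rightarrow> int) \<Rightarrow> young \<Rightarrow> young \<Rightarrow> (int \<Rightarrow> young)" where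
  "Vmin \<sigma> \<theta> \<mu> \<nu>p \<nu>m = (THE V. transition \<sigma> \<theta> \<mu> \<nu>p \<nu>m V \<and>
      (\<forall>W. transition \<sigma> \<theta> \<mu> \<nu>p \<nu>m W \<longrightarrow> (\<forall>n. V n \<subseteq> W n)))"

definition weights ::
  "nat \<Rightarrow> (int \<Rightarrow> int) \<Rightarrow> (int \<Rightarrow> int) \<Rightarrow> (int \<Rightarrow> int) \<Rightarrow> young \<Rightarrow> young \<Rightarrow> (int \<Rightarrow> young) \<Rightarrow> nat list" where
  "weights K \<sigma> \<theta> \<mu> \<nu>p \<nu>m V =
     map (\<lambda>i. \<Sum>n\<in>{n. n mod int K = int i \<and> V n \<noteq> Vmin \<sigma> \<theta> \<mu> \<nu>p \<nu>m n}.
                card (V n) - card (Vmin \<sigma> \<theta> \<mu> \<nu>p \<nu>m n)) [0..<K]"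

text \<open>Formal power series in K commuting variables u_0..u_{K-1}: coefficient function
  on exponent vectors (nat lists of length K), with values in enat (a coefficient is the
  number of terms with that monomial; \<infinity> if infinitely many).\<close>
type_synonym fseries = "nat list \<Rightarrow> enat"

definition genseries :: "'a set \<Rightarrow> ('a \<Rightarrow> nat list) \<Rightarrow> fseries" where
  "genseries S wt = (\<lambda>a. if finite {x\<in>S. wt x = a} then enat (card {x\<in>S. wt x = a}) else \<infinity>)"

definition F ::
  "nat \<Rightarrow> (int \<Rightarrow> int) \<Rightarrow> (int \<Rightarrow> int) \<Rightarrow> (int \<Rightarrow> int) \<Rightarrow> young \<Rightarrow> young \<Rightarrow> fseries" where
  "F K \<sigma> \<theta> \<mu> \<nu>p \<nu>m = genseries (transitions \<sigma> \<theta> \<mu> \<nu>p \<nu>m) (weights K \<sigma> \<theta> \<mu> \<nu>p \<nu>m)"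

text \<open>Exponent of u_i after the substitution u'_{i+kL} = u_i (0\<le>i<L, 0\<le>k<M).\<close>
definition collapse :: "nat \<Rightarrow> nat \<Rightarrow> nat list \<Rightarrow> nat list" where
  "collapse L M w = map (\<lambda>i. \<Sum>k<M. w ! (i + k * L)) [0..<L]"

text \<open>The substitution u'_{i+kL} := u_i applied to a series in ML variables, giving a
  series in L variables: the coefficient of u^a is the (finite) sum of the coefficients of
  all monomials u'^w which specialize to u^a.\<close>
definition specialize :: "nat \<Rightarrow> nat \<Rightarrow> fseries \<Rightarrow> fseries" where
  "specialize L M c = (\<lambda>a. \<Sum>w\<in>{w. length w = M * L \<and> collapse L M w = a}. c w)"

end

theory Submission
  imports Defs
begin

(* The transition condition at slice m only involves sigma(theta m) and
   mu(theta m), so both data define the same set of transitions and the same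
   minimal transition; only the colouring of atoms (slice n mod ML versus
   n mod L) differs. *)

section \<open>Young diagrams and interlacing as conditions on box sets\<close>

lemma finite_downset_nat:
  assumes "finite (S :: nat set)" "\<And>x y. x \<in> S \<Longrightarrow> y \<le> x \<Longrightarrow> y \<in> S"
  shows "S = {..<card S}"
proof -
  have "S \<subseteq> {..<card S}"
  proof
    fix x assume "x \<in> S"
    hence "{..x} \<subseteq> S" using assms(2) by auto
    hence "card {..x} \<le> card S" using assms(1) card_mono by blast
    thus "x \<in> {..<card S}" by simp
  qed
  from card_subset_eq[OF _ this] show ?thesis by simp
qed

lemma row_boxes: assumes "young Y" shows "{x. (x, j) \<in> Y} = {..<row Y j}"
  unfolding row_def
proof (rule finite_downset_nat)
  have "{x. (x, j) \<in> Y} \<subseteq> fst ` Y" by force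
  thus "finite {x. (x, j) \<in> Y}" using assms finite_subset unfolding young_def by blast
qed (use assms in \<open>auto simp: young_def\<close>)

lemma col_boxes: assumes "young Y" shows "{y. (j, y) \<in> Y} = {..<col Y j}"
  unfolding col_def
proof (rule finite_downset_nat)
  have "{y. (j, y) \<in> Y} \<subseteq> snd ` Y" by force
  thus "finite {y. (j, y) \<in> Y}" using assms finite_subset unfolding young_def by blast
qed (use assms in \<open>auto simp: young_def\<close>)

(* Unlike the
   inequalities on row lengths, these conditions are stable under
   intersections. *)
definition interl_plus_boxes :: "young \<Rightarrow> young \<Rightarrow> bool" where
  "interl_plus_boxes Y Y' \<longleftrightarrow> Y' \<subseteq> Y \<and> (\<forall>x j. (x, Suc j) \<in> Y \<longrightarrow> (x, j) \<in> Y')"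

definition interl_minus_boxes :: "young \<Rightarrow> young \<Rightarrow> bool" where
  "interl_minus_boxes Y Y' \<longleftrightarrow> Y' \<subseteq> Y \<and> (\<forall>i y. (Suc i, y) \<in> Y \<longrightarrow> (i, y) \<in> Y')"

lemma interl_plus_iff_boxes:
  assumes "young Y" "young Y'" shows "interl_plus Y Y' \<longleftrightarrow> interl_plus_boxes Y Y'"
proof -
  have "row Y' j \<le> row Y k \<longleftrightarrow> {x. (x, j) \<in> Y'} \<subseteq> {x. (x, k) \<in> Y}"
    and "row Y j \<le> row Y' k \<longleftrightarrow> {x. (x, j) \<in> Y} \<subseteq> {x. (x, k) \<in> Y'}" for j k
    using assms by (simp_all add: row_boxes)
  hence "interl_plus Y Y' \<longleftrightarrow>
      (\<forall>j. {x. (x, j) \<in> Y'} \<subseteq> {x. (x, j) \<in> Y} \<and> {x. (x, Suc j) \<in> Y} \<subseteq> {x. (x, j) \<in> Y'})"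
    unfolding interl_plus_def by presburger
  thus ?thesis unfolding interl_plus_boxes_def subset_iff mem_Collect_eq by auto
qed

lemma interl_minus_iff_boxes:
  assumes "young Y" "young Y'" shows "interl_minus Y Y' \<longleftrightarrow> interl_minus_boxes Y Y'"
proof -
  have "col Y' j \<le> col Y k \<longleftrightarrow> {y. (j, y) \<in> Y'} \<subseteq> {y. (k, y) \<in> Y}"
    and "col Y j \<le> col Y' k \<longleftrightarrow> {y. (j, y) \<in> Y} \<subseteq> {y. (k, y) \<in> Y'}" for j k
    using assms by (simp_all add: col_boxes)
  hence "interl_minus Y Y' \<longleftrightarrow>
      (\<forall>j. {y. (j, y) \<in> Y'} \<subseteq> {y. (j, y) \<in> Y} \<and> {y. (Suc j, y) \<in> Y} \<subseteq> {y. (j, y) \<in> Y'})"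
    unfolding interl_minus_def by presburger
  thus ?thesis unfolding interl_minus_boxes_def subset_iff mem_Collect_eq by auto
qed

lemma interl_subset:
  assumes "young Y" "young Y'" "interl s Y Y'" shows "Y' \<subseteq> Y"
  using assms interl_plus_iff_boxes interl_minus_iff_boxes
  unfolding interl_def interl_plus_boxes_def interl_minus_boxes_def by (auto split: if_splits)

lemma young_Inter:
  assumes "V0 \<in> S" "\<forall>V\<in>S. young (f V)" shows "young (\<Inter>V\<in>S. f V)"
proof -
  have "finite (f V0)" using assms unfolding young_def by blast
  hence "finite (\<Inter>V\<in>S. f V)" using assms(1) by (meson INT_lower finite_subset)
  moreover have "(x', y') \<in> (\<Inter>V\<in>S. f V)"
    if xy: "(x, y) \<in> (\<Inter>V\<in>S. f V)" and "x' \<le> x" "y' \<le> y" for x y x' y'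
  proof (rule INT_I)
    fix V assume "V \<in> S"
    hence "(x, y) \<in> f V" "young (f V)" using xy assms(2) by blast+
    thus "(x', y') \<in> f V" using \<open>x' \<le> x\<close> \<open>y' \<le> y\<close> unfolding young_def by blast
  qed
  ultimately show ?thesis unfolding young_def by blast
qed

lemma interl_Inter:
  assumes "V0 \<in> S" "\<forall>V\<in>S. young (f V) \<and> young (g V) \<and> interl s (f V) (g V)"
  shows "interl s (\<Inter>V\<in>S. f V) (\<Inter>V\<in>S. g V)"
proof -
  have yf: "young (\<Inter>V\<in>S. f V)" and yg: "young (\<Inter>V\<in>S. g V)"
    using young_Inter[OF assms(1)] assms(2) by auto
  show ?thesis
  proof (cases "s = 1")
    case True
    hence "\<forall>V\<in>S. interl_plus_boxes (f V) (g V)"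
      using assms(2) interl_plus_iff_boxes unfolding interl_def by auto
    hence "interl_plus_boxes (\<Inter>V\<in>S. f V) (\<Inter>V\<in>S. g V)"
      unfolding interl_plus_boxes_def by blast
    thus ?thesis using True interl_plus_iff_boxes[OF yf yg] unfolding interl_def by simp
  next
    case False
    hence "\<forall>V\<in>S. interl_minus_boxes (f V) (g V)"
      using assms(2) interl_minus_iff_boxes unfolding interl_def by auto
    hence "interl_minus_boxes (\<Inter>V\<in>S. f V) (\<Inter>V\<in>S. g V)"
      unfolding interl_minus_boxes_def by blast
    thus ?thesis using False interl_minus_iff_boxes[OF yf yg] unfolding interl_def by simp
  qed
qed

section \<open>Affine permutations and Maya diagrams\<close>

lemma periodic_mod:
  assumes "periodic K f" shows "f (m mod int K) = f m"
proof -
  have shift: "f (r + k * int K) = f r" for r k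
  proof (induction k rule: int_induct[where k = 0])
    case (step1 i) thus ?case using assms[unfolded periodic_def, rule_format, of "r + i * int K"]
      by (simp add: algebra_simps)
  next
    case (step2 i) thus ?case using assms[unfolded periodic_def, rule_format, of "r + (i - 1) * int K"]
      by (simp add: algebra_simps)
  qed simp
  show ?thesis using shift[of "m mod int K" "m div int K"] by simp
qed

(* An affine permutation moves every point by a bounded amount, because its
   displacement theta m - m is K-periodic. *)
lemma affine_perm_displacement_bounded:
  assumes "affine_perm K \<theta>" "K \<ge> 1"
  shows "\<exists>C. \<forall>m. \<bar>\<theta> m - m\<bar> \<le> C"
proof -
  have "periodic K (\<lambda>m. \<theta> m - m)"
    using assms(1) unfolding affine_perm_def periodic_def by simp
  from periodic_mod[OF this] have disp: "\<theta> m - m = \<theta> (m mod int K) - m mod int K" for m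
    by simp
  have "\<bar>\<theta> (m mod int K) - m mod int K\<bar> \<le> Max ((\<lambda>r. \<bar>\<theta> r - r\<bar>) ` {0..<int K})" for m
  proof (rule Max_ge)
    have "m mod int K \<in> {0..<int K}" using assms(2) by simp
    thus "\<bar>\<theta> (m mod int K) - m mod int K\<bar> \<in> (\<lambda>r. \<bar>\<theta> r - r\<bar>) ` {0..<int K}" by (rule imageI)
  qed simp
  thus ?thesis by (metis disp)
qed

(* Consequently mu o theta is a Maya diagram again: -1 far to the left and +1
   far to the right.  These are the regions where every transition is forced
   to be monotone. *)
lemma maya_affine_tails:
  assumes "affine_perm K \<theta>" "K \<ge> 1" "maya \<mu>"
  shows "\<exists>T1. \<forall>m\<le>T1. \<mu> (\<theta> m) \<noteq> 1" and "\<exists>T2. \<forall>m\<ge>T2. \<mu> (\<theta> m) = 1"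
proof -
  obtain C where C: "\<forall>m. \<bar>\<theta> m - m\<bar> \<le> C"
    using affine_perm_displacement_bounded[OF assms(1,2)] by blast
  obtain N1 where N1: "\<forall>m. m \<le> -N1 \<longrightarrow> \<mu> m = -1" using assms(3) unfolding maya_def by blast
  obtain N2 where N2: "\<forall>m. m \<ge> N2 \<longrightarrow> \<mu> m = 1" using assms(3) unfolding maya_def by blast
  have "\<mu> (\<theta> m) \<noteq> 1" if "m \<le> -N1 - C" for m
  proof -
    have "\<theta> m \<le> -N1" using C[rule_format, of m] that by linarith
    thus ?thesis using N1 by simp
  qed
  thus "\<exists>T1. \<forall>m\<le>T1. \<mu> (\<theta> m) \<noteq> 1" by blast
  have "\<mu> (\<theta> m) = 1" if "m \<ge> N2 + C" for m
  proof -
    have "\<theta> m \<ge> N2" using C[rule_format, of m] that by linarith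
    thus ?thesis using N2 by simp
  qed
  thus "\<exists>T2. \<forall>m\<ge>T2. \<mu> (\<theta> m) = 1" by blast
qed

section \<open>Transitions and the minimal transition\<close>

lemma transitionD:
  assumes "transition \<sigma> \<theta> \<mu> \<nu>p \<nu>m V"
  shows "young (V n)" and "\<exists>N. \<forall>n. n \<le> -N \<longrightarrow> V n = \<nu>m" and "\<exists>N. \<forall>n. n \<ge> N \<longrightarrow> V n = \<nu>p"
    and "if \<mu> (\<theta> m) = 1 then interl (\<sigma> (\<theta> m)) (V m) (V (m + 1))
         else interl (\<sigma> (\<theta> m)) (V (m + 1)) (V m)"
  using assms unfolding transition_def by simp_all

lemma transition_step:
  assumes tr: "transition \<sigma> \<theta> \<mu> \<nu>p \<nu>m V"
  shows "\<mu> (\<theta> m) = 1 \<Longrightarrow> V (m + 1) \<subseteq> V m" and "\<mu> (\<theta> m) \<noteq> 1 \<Longrightarrow> V m \<subseteq> V (m + 1)"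
  using transitionD(4)[OF tr, of m] interl_subset[OF transitionD(1)[OF tr] transitionD(1)[OF tr]]
  by simp_all

(* Left of T1 a transition only grows, so each slice there contains the
   limiting diagram nu_-; symmetrically, right of T2 each slice contains nu_+. *)
lemma transition_left_tail:
  assumes tr: "transition \<sigma> \<theta> \<mu> \<nu>p \<nu>m V" and T1: "\<forall>m\<le>T1. \<mu> (\<theta> m) \<noteq> 1"
    and n: "n \<le> T1 + 1"
  shows "\<nu>m \<subseteq> V n"
proof -
  obtain N where N: "\<forall>n. n \<le> -N \<longrightarrow> V n = \<nu>m" using transitionD(2)[OF tr] by blast
  have "min n (-N) \<le> n" by simp
  hence "n \<le> T1 + 1 \<longrightarrow> \<nu>m \<subseteq> V n"
  proof (induction n rule: int_ge_induct)
    case base show ?case using N by simp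
  next
    case (step i) thus ?case using transition_step(2)[OF tr] T1 by fastforce
  qed
  thus ?thesis using n by blast
qed

lemma transition_right_tail:
  assumes tr: "transition \<sigma> \<theta> \<mu> \<nu>p \<nu>m V" and T2: "\<forall>m\<ge>T2. \<mu> (\<theta> m) = 1"
    and n: "T2 \<le> n"
  shows "\<nu>p \<subseteq> V n"
proof -
  obtain N where N: "\<forall>n. n \<ge> N \<longrightarrow> V n = \<nu>p" using transitionD(3)[OF tr] by blast
  have "n \<le> max n N" by simp
  hence "T2 \<le> n \<longrightarrow> \<nu>p \<subseteq> V n"
  proof (induction n rule: int_le_induct)
    case base show ?case using N by simp
  next
    case (step i) thus ?case using transition_step(1)[OF tr, of "i - 1"] T2 by fastforce
  qed
  thus ?thesis using n by blast
qed

(* The slice-wise intersection of all transitions is itself a transition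
   (hence the minimal one), as soon as one transition exists and the signs
   mu(theta m) are eventually constant in both directions. *)
lemma Inter_transitions:
  assumes tr0: "transition \<sigma> \<theta> \<mu> \<nu>p \<nu>m V0"
    and T1: "\<forall>m\<le>T1. \<mu> (\<theta> m) \<noteq> 1" and T2: "\<forall>m\<ge>T2. \<mu> (\<theta> m) = 1"
  shows "transition \<sigma> \<theta> \<mu> \<nu>p \<nu>m (\<lambda>n. \<Inter>V\<in>transitions \<sigma> \<theta> \<mu> \<nu>p \<nu>m. V n)"
proof -
  define S where "S = transitions \<sigma> \<theta> \<mu> \<nu>p \<nu>m"
  define W where "W n = (\<Inter>V\<in>S. V n)" for n
  have V0: "V0 \<in> S" and trS: "\<And>V. V \<in> S \<Longrightarrow> transition \<sigma> \<theta> \<mu> \<nu>p \<nu>m V"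
    using tr0 unfolding S_def transitions_def by simp_all
  have yS: "\<forall>V\<in>S. young (V n)" for n using trS transitionD(1) by blast
  have young_W: "young (W n)" for n
    unfolding W_def using young_Inter[OF V0, of "\<lambda>V. V n"] yS by simp
  have left: "\<exists>N. \<forall>n. n \<le> -N \<longrightarrow> W n = \<nu>m"
  proof -
    obtain N1 where N1: "\<forall>n. n \<le> -N1 \<longrightarrow> V0 n = \<nu>m" using transitionD(2)[OF tr0] by blast
    have "W n = \<nu>m" if n: "n \<le> - max N1 (- (T1 + 1))" for n
    proof -
      have "W n \<subseteq> V0 n" unfolding W_def using V0 by blast
      moreover have "\<nu>m \<subseteq> W n" unfolding W_def
        using transition_left_tail[OF trS T1] n by (intro INT_greatest) simp
      ultimately show ?thesis using N1 n by simp
    qed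
    thus ?thesis by blast
  qed
  have right: "\<exists>N. \<forall>n. n \<ge> N \<longrightarrow> W n = \<nu>p"
  proof -
    obtain N2 where N2: "\<forall>n. n \<ge> N2 \<longrightarrow> V0 n = \<nu>p" using transitionD(3)[OF tr0] by blast
    have "W n = \<nu>p" if n: "n \<ge> max N2 T2" for n
    proof -
      have "W n \<subseteq> V0 n" unfolding W_def using V0 by blast
      moreover have "\<nu>p \<subseteq> W n" unfolding W_def
        using transition_right_tail[OF trS T2] n by (intro INT_greatest) simp
      ultimately show ?thesis using N2 n by simp
    qed
    thus ?thesis by blast
  qed
  have interl_W: "if \<mu> (\<theta> m) = 1 then interl (\<sigma> (\<theta> m)) (W m) (W (m + 1))
                  else interl (\<sigma> (\<theta> m)) (W (m + 1)) (W m)" for m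
  proof (cases "\<mu> (\<theta> m) = 1")
    case True
    have "\<forall>V\<in>S. young (V m) \<and> young (V (m + 1)) \<and> interl (\<sigma> (\<theta> m)) (V m) (V (m + 1))"
      using transitionD(4)[OF trS, of _ m] True yS by simp
    from interl_Inter[OF V0 this] show ?thesis unfolding W_def using True by simp
  next
    case False
    have "\<forall>V\<in>S. young (V (m + 1)) \<and> young (V m) \<and> interl (\<sigma> (\<theta> m)) (V (m + 1)) (V m)"
      using transitionD(4)[OF trS, of _ m] False yS by simp
    from interl_Inter[OF V0 this] show ?thesis unfolding W_def using False by simp
  qed
  have "transition \<sigma> \<theta> \<mu> \<nu>p \<nu>m W"
    unfolding transition_def by (intro conjI allI young_W left right interl_W)
  thus ?thesis unfolding W_def S_def .
qed

(* Under the same hypotheses, Vmin is a transition: the minimal transition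
   exists and is unique, so the definite description selects it. *)
lemma Vmin_transition:
  assumes "transition \<sigma> \<theta> \<mu> \<nu>p \<nu>m V0"
    and "affine_perm K \<theta>" "K \<ge> 1" "maya \<mu>"
  shows "transition \<sigma> \<theta> \<mu> \<nu>p \<nu>m (Vmin \<sigma> \<theta> \<mu> \<nu>p \<nu>m)"
proof -
  let ?minimal = "\<lambda>V. transition \<sigma> \<theta> \<mu> \<nu>p \<nu>m V \<and>
      (\<forall>W. transition \<sigma> \<theta> \<mu> \<nu>p \<nu>m W \<longrightarrow> (\<forall>n. V n \<subseteq> W n))"
  define W where "W = (\<lambda>n. \<Inter>V\<in>transitions \<sigma> \<theta> \<mu> \<nu>p \<nu>m. V n)"
  obtain T1 where T1: "\<forall>m\<le>T1. \<mu> (\<theta> m) \<noteq> 1" using maya_affine_tails(1)[OF assms(2-4)] by blast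
  obtain T2 where T2: "\<forall>m\<ge>T2. \<mu> (\<theta> m) = 1" using maya_affine_tails(2)[OF assms(2-4)] by blast
  have "transition \<sigma> \<theta> \<mu> \<nu>p \<nu>m W"
    unfolding W_def by (rule Inter_transitions[OF assms(1) T1 T2])
  moreover have "\<forall>U. transition \<sigma> \<theta> \<mu> \<nu>p \<nu>m U \<longrightarrow> (\<forall>n. W n \<subseteq> U n)"
    unfolding W_def transitions_def by blast
  ultimately have min_W: "?minimal W" by blast
  have "\<exists>!V. ?minimal V"
  proof (rule ex1I[of _ W])
    show "?minimal W" by (fact min_W)
    fix V assume min_V: "?minimal V"
    show "V = W"
    proof (intro ext subset_antisym)
      fix n
      show "V n \<subseteq> W n" using min_V min_W by blast
      show "W n \<subseteq> V n" using min_V min_W by blast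
    qed
  qed
  from theI'[OF this] show ?thesis unfolding Vmin_def by (rule conjunct1)
qed

lemma transitions_finite_difference:
  assumes "transition \<sigma> \<theta> \<mu> \<nu>p \<nu>m V" "transition \<sigma> \<theta> \<mu> \<nu>p \<nu>m U"
  shows "finite {n. V n \<noteq> U n}"
proof -
  obtain a where a: "\<forall>n. n \<le> -a \<longrightarrow> V n = \<nu>m" using transitionD(2)[OF assms(1)] by blast
  obtain b where b: "\<forall>n. n \<le> -b \<longrightarrow> U n = \<nu>m" using transitionD(2)[OF assms(2)] by blast
  obtain c where c: "\<forall>n. n \<ge> c \<longrightarrow> V n = \<nu>p" using transitionD(3)[OF assms(1)] by blast
  obtain d where d: "\<forall>n. n \<ge> d \<longrightarrow> U n = \<nu>p" using transitionD(3)[OF assms(2)] by blast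
  have "{n. V n \<noteq> U n} \<subseteq> {- max a b <..< max c d}"
  proof
    fix n assume "n \<in> {n. V n \<noteq> U n}"
    moreover have "n \<le> - max a b \<Longrightarrow> V n = U n" using a b by simp
    moreover have "n \<ge> max c d \<Longrightarrow> V n = U n" using c d by simp
    ultimately show "n \<in> {- max a b <..< max c d}" by force
  qed
  thus ?thesis by (rule finite_subset) simp
qed

lemma transition_reindex:
  assumes "\<sigma> \<circ> \<theta> = \<sigma>' \<circ> \<theta>'" "\<mu> \<circ> \<theta> = \<mu>' \<circ> \<theta>'"
  shows "transition \<sigma>' \<theta>' \<mu>' = transition \<sigma> \<theta> \<mu>"
proof -
  have "\<sigma>' (\<theta>' m) = \<sigma> (\<theta> m)" "\<mu>' (\<theta>' m) = \<mu> (\<theta> m)" for m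
    using fun_cong[OF assms(1), of m] fun_cong[OF assms(2), of m] by simp_all
  thus ?thesis by (intro ext) (simp only: transition_def)
qed

section \<open>Residue class sums\<close>

definition residue_sums :: "nat \<Rightarrow> int set \<Rightarrow> (int \<Rightarrow> nat) \<Rightarrow> nat list" where
  "residue_sums K S d = map (\<lambda>i. \<Sum>n\<in>{n. n mod int K = int i \<and> n \<in> S}. d n) [0..<K]"

lemma weights_residue_sums:
  "weights K \<sigma> \<theta> \<mu> \<nu>p \<nu>m V = residue_sums K {n. V n \<noteq> Vmin \<sigma> \<theta> \<mu> \<nu>p \<nu>m n}
     (\<lambda>n. card (V n) - card (Vmin \<sigma> \<theta> \<mu> \<nu>p \<nu>m n))"
  unfolding weights_def residue_sums_def by simp

lemma mod_mult_residue_iff: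
  fixes L M i k :: nat and n :: int
  assumes "i < L" "k < M"
  shows "n mod int (M * L) = int (i + k * L) \<longleftrightarrow>
         n mod int L = int i \<and> nat (n div int L mod int M) = k"
proof -
  define q where "q = n div int L mod int M"
  define r where "r = n mod int L"
  have decomp: "n mod int (M * L) = int L * q + r"
    using mod_mult2_eq'[of n L M] unfolding q_def r_def by (simp add: mult.commute)
  have q: "0 \<le> q" "q < int M" and r: "0 \<le> r" "r < int L"
    using assms unfolding q_def r_def by simp_all
  have "int L * q + r = int i + int k * int L \<longleftrightarrow> r = int i \<and> q = int k"
  proof
    assume eq: "int L * q + r = int i + int k * int L"
    have "r = (int L * q + r) mod int L" using r by simp
    also have "\<dots> = int i" using eq assms(1) by simp
    finally show "r = int i \<and> q = int k" using eq assms(1) by (simp add: mult.commute)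
  qed (simp add: mult.commute)
  thus ?thesis using decomp q unfolding q_def[symmetric] r_def[symmetric] by auto
qed

lemma collapse_residue_sums:
  assumes fin: "finite S" and M: "M \<ge> 1"
  shows "collapse L M (residue_sums (M * L) S d) = residue_sums L S d"
proof (rule nth_equalityI)
  show "length (collapse L M (residue_sums (M * L) S d)) = length (residue_sums L S d)"
    unfolding collapse_def residue_sums_def by simp
  fix i assume "i < length (collapse L M (residue_sums (M * L) S d))"
  hence i: "i < L" unfolding collapse_def by simp
  define C where "C = {n. n mod int L = int i \<and> n \<in> S}"
  define block where "block n = nat (n div int L mod int M)" for n
  have finC: "finite C" unfolding C_def using fin by simp
  have "block ` C \<subseteq> {..<M}" unfolding block_def using M by (auto simp: nat_less_iff)
  have index_bound: "i + k * L < M * L" if "k < M" for k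
  proof -
    have "(k + 1) * L \<le> M * L" using that by (intro mult_le_mono1) simp
    thus ?thesis using i by simp
  qed
  have blocks: "{n. n mod int (M * L) = int (i + k * L) \<and> n \<in> S} = {n \<in> C. block n = k}"
    if "k < M" for k
    using mod_mult_residue_iff[OF i that] unfolding C_def block_def by blast
  have "collapse L M (residue_sums (M * L) S d) ! i
      = (\<Sum>k<M. \<Sum>n\<in>{n. n mod int (M * L) = int (i + k * L) \<and> n \<in> S}. d n)"
    unfolding collapse_def residue_sums_def using i index_bound by (simp del: of_nat_add of_nat_mult)
  also have "\<dots> = (\<Sum>k<M. \<Sum>n\<in>{n \<in> C. block n = k}. d n)"
    by (rule sum.cong[OF refl]) (simp only: blocks lessThan_iff)
  also have "\<dots> = (\<Sum>n\<in>C. d n)"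
    by (rule sum.group[OF finC _ \<open>block ` C \<subseteq> {..<M}\<close>]) simp
  also have "\<dots> = residue_sums L S d ! i"
    using i unfolding C_def residue_sums_def by simp
  finally show "collapse L M (residue_sums (M * L) S d) ! i = residue_sums L S d ! i" .
qed

section \<open>Specialisation of generating series\<close>

definition ecard :: "'a set \<Rightarrow> enat" where
  "ecard X = (if finite X then enat (card X) else \<infinity>)"

lemma genseries_ecard: "genseries T wt a = ecard {x \<in> T. wt x = a}"
  unfolding genseries_def ecard_def by simp

lemma ecard_UN_disjoint:
  assumes "finite I" "\<forall>i\<in>I. \<forall>j\<in>I. i \<noteq> j \<longrightarrow> A i \<inter> A j = {}"
  shows "(\<Sum>i\<in>I. ecard (A i)) = ecard (\<Union>i\<in>I. A i)"
proof (cases "\<forall>i\<in>I. finite (A i)")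
  case True
  hence "ecard (\<Union>i\<in>I. A i) = enat (\<Sum>i\<in>I. card (A i))"
    unfolding ecard_def using card_UN_disjoint[OF assms(1) True assms(2)] True assms(1) by simp
  also have "\<dots> = (\<Sum>i\<in>I. ecard (A i))"
    using True unfolding ecard_def by (simp flip: of_nat_eq_enat)
  finally show ?thesis by simp
next
  case False
  then obtain i where i: "i \<in> I" "infinite (A i)" by blast
  hence "infinite (\<Union>i\<in>I. A i)" by (meson UN_upper finite_subset)
  moreover have "ecard (A i) \<le> (\<Sum>i\<in>I. ecard (A i))"
    by (rule member_le_sum[OF i(1) _ assms(1)]) simp
  ultimately show ?thesis using i unfolding ecard_def by simp
qed

(* Only finitely many exponent vectors in ML variables specialise to a given
   exponent vector in L variables: all their entries are bounded by the
   total degree. *)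
lemma finite_collapse_fibre:
  assumes "L \<ge> 1"
  shows "finite {w. length w = M * L \<and> collapse L M w = a}"
proof (rule finite_subset)
  show "finite {w. set w \<subseteq> {..sum_list a} \<and> length w = M * L}"
    by (rule finite_lists_length_eq) simp
  have "x \<le> sum_list a" if w: "length w = M * L" "collapse L M w = a" "x \<in> set w" for w x
  proof -
    obtain j where j: "j < M * L" "w ! j = x" using w by (auto simp: in_set_conv_nth)
    have iL: "j mod L < L" using assms by simp
    have "w ! j \<le> (\<Sum>k<M. w ! (j mod L + k * L))"
      using member_le_sum[of "j div L" "{..<M}" "\<lambda>k. w ! (j mod L + k * L)"] j(1)
      by (simp add: less_mult_imp_div_less)
    also have "\<dots> = a ! (j mod L)" using iL w(2) unfolding collapse_def by auto
    also have "\<dots> \<le> sum_list a"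
      using iL w(2) unfolding collapse_def by (auto intro: member_le_sum_list)
    finally show ?thesis using j by simp
  qed
  thus "{w. length w = M * L \<and> collapse L M w = a}
          \<subseteq> {w. set w \<subseteq> {..sum_list a} \<and> length w = M * L}" by blast
qed

(* Specialising a generating series in ML variables is the generating series
   of the collapsed weights: each object is counted once, in the fibre of its
   collapsed weight. *)
lemma specialize_genseries:
  assumes "L \<ge> 1"
    and "\<forall>x\<in>T. length (wt x) = M * L \<and> collapse L M (wt x) = wt' x"
  shows "specialize L M (genseries T wt) = genseries T wt'"
proof
  fix a
  define W where "W = {w. length w = M * L \<and> collapse L M w = a}"
  have "specialize L M (genseries T wt) a = (\<Sum>w\<in>W. ecard {x \<in> T. wt x = w})"
    unfolding specialize_def W_def genseries_ecard ..
  also have "\<dots> = ecard (\<Union>w\<in>W. {x \<in> T. wt x = w})"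
    by (rule ecard_UN_disjoint) (use finite_collapse_fibre[OF assms(1)] W_def in auto)
  also have "(\<Union>w\<in>W. {x \<in> T. wt x = w}) = {x \<in> T. wt' x = a}"
    unfolding W_def using assms(2) by auto
  finally show "specialize L M (genseries T wt) a = genseries T wt' a"
    by (simp only: genseries_ecard[of T wt' a])
qed

theorem mainTheorem2:
  fixes L M :: nat
    and \<sigma> \<theta> \<sigma>' \<theta>' \<mu> \<mu>' :: "int \<Rightarrow> int"
    and \<nu>p \<nu>m :: young
  assumes "L \<ge> 1" and "M \<ge> 1"
    and "periodic L \<sigma>" and "pm_valued \<sigma>" and "affine_perm L \<theta>"
    and "periodic (M * L) \<sigma>'" and "pm_valued \<sigma>'" and "affine_perm (M * L) \<theta>'"
    and "maya \<mu>" and "maya \<mu>'"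
    and "young \<nu>p" and "young \<nu>m"
    and "\<sigma> \<circ> \<theta> = \<sigma>' \<circ> \<theta>'" and "\<mu> \<circ> \<theta> = \<mu>' \<circ> \<theta>'"
  shows "specialize L M (F (M * L) \<sigma>' \<theta>' \<mu>' \<nu>p \<nu>m) = F L \<sigma> \<theta> \<mu> \<nu>p \<nu>m"
proof -
  define T where "T = transitions \<sigma> \<theta> \<mu> \<nu>p \<nu>m"
  define U where "U = Vmin \<sigma> \<theta> \<mu> \<nu>p \<nu>m"
  have same_data: "transition \<sigma>' \<theta>' \<mu>' = transition \<sigma> \<theta> \<mu>"
    using transition_reindex[OF assms(13,14)] .
  have F': "F (M * L) \<sigma>' \<theta>' \<mu>' \<nu>p \<nu>m = genseries T (weights (M * L) \<sigma> \<theta> \<mu> \<nu>p \<nu>m)"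
    unfolding F_def weights_def Vmin_def transitions_def same_data T_def ..
  have "collapse L M (weights (M * L) \<sigma> \<theta> \<mu> \<nu>p \<nu>m V) = weights L \<sigma> \<theta> \<mu> \<nu>p \<nu>m V"
    if "V \<in> T" for V
  proof -
    have V: "transition \<sigma> \<theta> \<mu> \<nu>p \<nu>m V" using that unfolding T_def transitions_def by simp
    have "finite {n. V n \<noteq> U n}" unfolding U_def
      by (rule transitions_finite_difference[OF V Vmin_transition[OF V assms(5,1,9)]])
    thus ?thesis
      unfolding weights_residue_sums U_def[symmetric] by (rule collapse_residue_sums[OF _ assms(2)])
  qed
  thus ?thesis
    unfolding F' unfolding F_def T_def[symmetric]
    by (intro specialize_genseries[OF assms(1)]) (simp add: weights_def)
qed

end
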